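(* Let $\mathbb{X},\mathbb{Y}$ be real normed linear spaces and let $T\in\mathbb{B}(\mathbb{X},\mathbb{Y})$ be a smooth point of $\mathbb{B}(\mathbb{X},\mathbb{Y})$ with $M_T\neq\emptyset$. Then: (i) $M_T=\{\pm x_0\}$ for some $x_0\in S_{\mathbb{X}}$; (ii) $Tx_0$ is a smooth point of $\mathbb{Y}$; (iii) for every norming sequence $\{x_n\}$ for $T$, $x_0\in\overline{\operatorname{span}\{x_n:n\in\mathbb{N}\}}$.
   Context: All spaces are real; $\mathbb{B}(\mathbb{X},\mathbb{Y})$ has the operator norm; $S_{\mathbb{X}}$ is the unit sphere; $M_T=\{x\in S_{\mathbb{X}}:\|Tx\|=\|T\|\}$. A norming sequence for $T$ is $\{x_n\}\subseteq S_{\mathbb{X}}$ with $\|Tx_n\|\to\|T\|$. A nonzero element $x$ of a normed space $\mathbb{Z}$ is smooth if there is a unique $f\in\mathbb{Z}^*$ with $\|f\|=1$ and $f(x)=\|x\|$. *)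

theory Defs
  imports "HOL-Analysis.Analysis"
begin

definition smooth_point :: "'a::real_normed_vector \<Rightarrow> bool" where
  "smooth_point x \<longleftrightarrow> x \<noteq> 0 \<and>
     (\<exists>!f::'a \<Rightarrow>\<^sub>L real. norm f = 1 \<and> blinfun_apply f x = norm x)"

definition norm_attainment_set ::
  "('a::real_normed_vector \<Rightarrow>\<^sub>L 'b::real_normed_vector) \<Rightarrow> 'a set" where
  "norm_attainment_set T = {x. norm x = 1 \<and> norm (blinfun_apply T x) = norm T}"

definition norming_sequence ::
  "('a::real_normed_vector \<Rightarrow>\<^sub>L 'b::real_normed_vector) \<Rightarrow> (nat \<Rightarrow> 'a) \<Rightarrow> bool" where
  "norming_sequence T xs \<longleftrightarrow> (\<forall>n. norm (xs n) = 1) \<and>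
     (\<lambda>n. norm (blinfun_apply T (xs n))) \<longlonglongrightarrow> norm T"

end

theory Submission
  imports Defs
begin

text \<open>Let \<open>\<Phi>\<close> be the unique norm-one functional with \<open>\<Phi> T = \<parallel>T\<parallel>\<close>. Whenever \<open>\<parallel>x\<parallel> \<le> 1\<close>,
  \<open>\<parallel>g\<parallel> \<le> 1\<close> and \<open>g (T x) = \<parallel>T\<parallel>\<close>, the functional \<open>S \<mapsto> g (S x)\<close> on operators also supports \<open>T\<close>,
  so it equals \<open>\<Phi>\<close>. Evaluating this identity on rank-one operators \<open>z \<mapsto> u z \<cdot> v\<close> shows that
  any two points of \<open>M\<^sub>T\<close> are proportional, giving (i), and that \<open>g\<close> is determined by \<open>T\<close>,
  giving (ii). For (iii), if \<open>x\<^sub>0\<close> is not in the closed span of a norming sequence \<open>(x\<^sub>n)\<close>,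
  a functional \<open>f\<close> with \<open>f x\<^sub>0 = 1\<close> and \<open>f x\<^sub>n = 0\<close> yields \<open>A = f(\<cdot>) T x\<^sub>0\<close> with
  \<open>\<Phi> A = \<parallel>T\<parallel>\<close>; but \<open>\<parallel>a T + b A\<parallel> \<ge> a \<parallel>T\<parallel>\<close>, since \<open>A\<close> vanishes along the norming sequence,
  so Hahn-Banach produces a second support functional of \<open>T\<close> vanishing at \<open>A\<close>.

  Hahn-Banach is proved from Zorn's lemma: a minimal sublinear functional below a given one
  is linear.\<close>

section \<open>Sublinear functionals and the Hahn-Banach theorem\<close>

definition sublinear :: "('v::real_vector \<Rightarrow> real) \<Rightarrow> bool" where
  "sublinear p \<longleftrightarrow>
     (\<forall>x y. p (x + y) \<le> p x + p y) \<and> (\<forall>c x. 0 \<le> c \<longrightarrow> p (c *\<^sub>R x) = c * p x)"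

lemma sublinearI:
  assumes "\<And>x y. p (x + y) \<le> p x + p y" and "p 0 = 0"
    and "\<And>c x. 0 < c \<Longrightarrow> p (c *\<^sub>R x) \<le> c * p x"
  shows "sublinear p"
  unfolding sublinear_def
proof (intro conjI allI impI assms(1))
  fix c :: real and x
  assume "0 \<le> c"
  show "p (c *\<^sub>R x) = c * p x"
  proof (cases "c = 0")
    case False
    with \<open>0 \<le> c\<close> have c: "0 < c" by simp
    have "p x = p (inverse c *\<^sub>R (c *\<^sub>R x))"
      using c by simp
    also have "\<dots> \<le> inverse c * p (c *\<^sub>R x)"
      using c by (intro assms(3)) simp
    finally have "c * p x \<le> p (c *\<^sub>R x)"
      using c by (simp add: field_simps)
    with assms(3)[OF c, of x] show ?thesis by simp
  qed (simp add: assms(2))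
qed

lemma sublinear_add: "sublinear p \<Longrightarrow> p (x + y) \<le> p x + p y"
  by (simp add: sublinear_def)

lemma sublinear_scaleR: "sublinear p \<Longrightarrow> 0 \<le> c \<Longrightarrow> p (c *\<^sub>R x) = c * p x"
  by (simp add: sublinear_def)

lemma sublinear_zero: "sublinear p \<Longrightarrow> p 0 = 0"
  using sublinear_scaleR[of p 0 0] by simp

lemma sublinear_minus_le: "sublinear p \<Longrightarrow> - p (- x) \<le> p x"
  using sublinear_add[of p x "- x"] sublinear_zero[of p] by simp

lemma sublinear_norm: "0 \<le> K \<Longrightarrow> sublinear (\<lambda>x::'v::real_normed_vector. K * norm x)"
  unfolding sublinear_def
  by (auto simp: distrib_left[symmetric] intro: mult_left_mono norm_triangle_ineq)

context
  fixes N :: "'v::real_vector \<Rightarrow> real" and F :: "'m::real_vector \<Rightarrow> 'v" and \<phi> :: "'m \<Rightarrow> real"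
    and S :: "'m set"
  assumes N: "sublinear N" and F: "linear F" and \<phi>: "linear \<phi>" and S: "convex_cone S"
    and dom: "\<forall>m\<in>S. \<phi> m \<le> N (F m)"
begin

lemma INF_translate_le:
  assumes "m \<in> S"
  shows "(INF s\<in>S. N (x + F s) - \<phi> s) \<le> N (x + F m) - \<phi> m"
proof (rule cINF_lower[OF _ assms])
  have "- N (- x) \<le> N (x + F s) - \<phi> s" if "s \<in> S" for s
    using sublinear_add[OF N, of "x + F s" "- x"] bspec[OF dom that] by simp
  then show "bdd_below ((\<lambda>s. N (x + F s) - \<phi> s) ` S)"
    by (auto intro!: bdd_belowI2)
qed

text \<open>A linear minorant of this infimum lies below \<open>N\<close> and, when \<open>S\<close> is a subspace, agrees with
  \<open>\<phi>\<close> along \<open>F\<close>. For the ray \<open>S = [0, \<infinity>)\<close> the same construction shows that minimal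
  sublinear functionals are linear.\<close>
lemma sublinear_INF_translate: "sublinear (\<lambda>x. INF s\<in>S. N (x + F s) - \<phi> s)"
  (is "sublinear ?p")
proof -
  have ge: "a \<le> ?p x" if "\<And>m. m \<in> S \<Longrightarrow> a \<le> N (x + F m) - \<phi> m" for a x
    using that convex_cone_nonempty[OF S] by (intro cINF_greatest) auto
  show ?thesis
  proof (rule sublinearI)
    fix x y
    have "?p (x + y) \<le> (N (x + F m) - \<phi> m) + (N (y + F m') - \<phi> m')"
      if "m \<in> S" "m' \<in> S" for m m'
    proof -
      have "?p (x + y) \<le> N ((x + F m) + (y + F m')) - \<phi> (m + m')"
        using INF_translate_le[OF convex_cone_add[OF S that], of "x + y"] linear_add[OF F]
        by (simp add: ac_simps)
      also have "\<dots> \<le> (N (x + F m) - \<phi> m) + (N (y + F m') - \<phi> m')"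
        using sublinear_add[OF N, of "x + F m" "y + F m'"] linear_add[OF \<phi>, of m m'] by simp
      finally show ?thesis .
    qed
    then have "?p (x + y) - (N (y + F m') - \<phi> m') \<le> ?p x" if "m' \<in> S" for m'
      using that by (intro ge) (auto simp: algebra_simps)
    then have "?p (x + y) - ?p x \<le> ?p y"
      by (intro ge) (auto simp: algebra_simps)
    then show "?p (x + y) \<le> ?p x + ?p y" by simp
  next
    show "?p 0 = 0"
    proof (rule antisym)
      show "?p 0 \<le> 0"
        using INF_translate_le[OF convex_cone_contains_0[OF S], of 0] sublinear_zero[OF N] F \<phi>
        by (simp add: linear_0)
      show "0 \<le> ?p 0"
        by (rule ge) (simp add: dom)
    qed
  next
    fix c :: real and x
    assume c: "0 < c"
    have "?p (c *\<^sub>R x) / c \<le> N (x + F m) - \<phi> m" if "m \<in> S" for m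
    proof -
      have "?p (c *\<^sub>R x) \<le> N (c *\<^sub>R (x + F m)) - \<phi> (c *\<^sub>R m)"
        using INF_translate_le[OF convex_cone_scaleR[OF S _ that], of c "c *\<^sub>R x"] c linear_scale[OF F]
        by (simp add: scaleR_add_right)
      also have "\<dots> = c * (N (x + F m) - \<phi> m)"
        using sublinear_scaleR[OF N] linear_scale[OF \<phi>] c by (simp add: right_diff_distrib)
      finally show ?thesis using c by (simp add: pos_divide_le_eq mult.commute)
    qed
    then have "?p (c *\<^sub>R x) / c \<le> ?p x"
      by (rule ge)
    then show "?p (c *\<^sub>R x) \<le> c * ?p x"
      using c by (simp add: pos_divide_le_eq mult.commute)
  qed
qed

end

lemma sublinear_minimal_imp_linear:
  fixes m :: "'v::real_vector \<Rightarrow> real"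
  assumes m: "sublinear m" and minimal: "\<And>q. sublinear q \<Longrightarrow> q \<le> m \<Longrightarrow> q = m"
  shows "linear m"
proof -
  have neg: "m (- z) = - m z" for z
  proof -
    let ?q = "\<lambda>y. INF t\<in>{0::real..}. m (y + t *\<^sub>R z) - t *\<^sub>R m z"
    have cone: "convex_cone {0::real..}"
      by (auto simp: convex_cone_iff)
    have dom: "\<forall>t\<in>{0..}. t *\<^sub>R m z \<le> m (t *\<^sub>R z)"
      using sublinear_scaleR[OF m] by simp
    note le = INF_translate_le[OF m linear_scaleR_left[of z] linear_scaleR_left[of "m z"] cone dom]
    have "?q = m"
    proof (rule minimal)
      show "sublinear ?q"
        by (rule sublinear_INF_translate[OF m linear_scaleR_left linear_scaleR_left cone dom])
      show "?q \<le> m"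
        using le[of 0] by (simp add: le_fun_def)
    qed
    then have "m (- z) = ?q (- z)" by (rule fun_cong[symmetric])
    also have "\<dots> \<le> m (- z + 1 *\<^sub>R z) - 1 *\<^sub>R m z"
      by (rule le) simp
    finally show ?thesis
      using sublinear_minus_le[OF m, of z] sublinear_zero[OF m] by simp
  qed
  show "linear m"
  proof (rule linearI)
    fix x y
    show "m (x + y) = m x + m y"
      using sublinear_add[OF m, of x y] sublinear_add[OF m, of "- x" "- y"] neg[of "x + y"] neg[of x] neg[of y]
      by (simp add: algebra_simps)
  next
    fix c :: real and x
    show "m (c *\<^sub>R x) = c *\<^sub>R m x"
    proof (cases "0 \<le> c")
      case False
      then have "m (c *\<^sub>R x) = - m ((- c) *\<^sub>R x)"
        using neg[of "(- c) *\<^sub>R x"] by simp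
      then show ?thesis
        using sublinear_scaleR[OF m, of "- c" x] False by simp
    qed (simp add: sublinear_scaleR[OF m])
  qed
qed

lemma Inf_sublinear_family_le:
  fixes C :: "('v::real_vector \<Rightarrow> real) set"
  assumes sub: "\<forall>q\<in>C. sublinear q \<and> q \<le> p" and "q \<in> C"
  shows "Inf C x \<le> q x"
  unfolding Inf_apply
proof (rule cINF_lower[OF _ \<open>q \<in> C\<close>])
  have "- p (- x) \<le> r x" if "r \<in> C" for r
  proof -
    have "r (- x) \<le> p (- x)"
      using bspec[OF sub that] by (simp add: le_fun_def)
    then show ?thesis
      using sublinear_minus_le[of r x] bspec[OF sub that] by linarith
  qed
  then show "bdd_below ((\<lambda>r. r x) ` C)"
    by (auto intro!: bdd_belowI2)
qed

lemma sublinear_Inf_chain: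
  fixes C :: "('v::real_vector \<Rightarrow> real) set"
  assumes "C \<noteq> {}" and sub: "\<forall>q\<in>C. sublinear q \<and> q \<le> p"
    and chain: "\<And>q r. q \<in> C \<Longrightarrow> r \<in> C \<Longrightarrow> q \<le> r \<or> r \<le> q"
  shows "sublinear (Inf C)"
proof -
  note le = Inf_sublinear_family_le[OF sub]
  have ge: "a \<le> Inf C x" if "\<And>q. q \<in> C \<Longrightarrow> a \<le> q x" for a x
    unfolding Inf_apply using that \<open>C \<noteq> {}\<close> by (intro cINF_greatest) auto
  show ?thesis
  proof (rule sublinearI)
    fix x y
    have "Inf C (x + y) \<le> q x + r y" if "q \<in> C" "r \<in> C" for q r
      using chain[OF that]
    proof
      assume "q \<le> r"
      then have "q y \<le> r y" by (simp add: le_fun_def)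
      then show ?thesis
        using le[OF that(1), of "x + y"] sublinear_add[of q x y] bspec[OF sub that(1)] by linarith
    next
      assume "r \<le> q"
      then have "r x \<le> q x" by (simp add: le_fun_def)
      then show ?thesis
        using le[OF that(2), of "x + y"] sublinear_add[of r x y] bspec[OF sub that(2)] by linarith
    qed
    then have "Inf C (x + y) - r y \<le> Inf C x" if "r \<in> C" for r
      using that by (intro ge) (auto simp: algebra_simps)
    then have "Inf C (x + y) - Inf C x \<le> Inf C y"
      by (intro ge) (auto simp: algebra_simps)
    then show "Inf C (x + y) \<le> Inf C x + Inf C y" by simp
  next
    obtain q where q: "q \<in> C" using \<open>C \<noteq> {}\<close> by blast
    show "Inf C 0 = 0"
    proof (rule antisym)
      show "Inf C 0 \<le> 0"
        using le[OF q, of 0] sublinear_zero[of q] bspec[OF sub q] by simp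
      show "0 \<le> Inf C 0"
        by (rule ge) (use sub sublinear_zero in fastforce)
    qed
  next
    fix c :: real and x
    assume c: "0 < c"
    have "Inf C (c *\<^sub>R x) / c \<le> q x" if "q \<in> C" for q
      using le[OF that, of "c *\<^sub>R x"] sublinear_scaleR[of q c x] bspec[OF sub that] c
      by (simp add: pos_divide_le_eq mult.commute)
    then have "Inf C (c *\<^sub>R x) / c \<le> Inf C x"
      by (rule ge)
    then show "Inf C (c *\<^sub>R x) \<le> c * Inf C x"
      using c by (simp add: pos_divide_le_eq mult.commute)
  qed
qed

lemma sublinear_ex_minimal_below:
  fixes p :: "'v::real_vector \<Rightarrow> real"
  assumes "sublinear p"
  shows "\<exists>m. sublinear m \<and> m \<le> p \<and> (\<forall>q. sublinear q \<longrightarrow> q \<le> m \<longrightarrow> q = m)"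
proof -
  define A where "A = {q. sublinear q \<and> q \<le> p}"
  define P where "P q r \<longleftrightarrow> r \<le> q" for q r :: "'v \<Rightarrow> real"
  have "partial_order_on A (relation_of P A)"
    unfolding partial_order_on_def preorder_on_def refl_on_def trans_def antisym_def
      relation_of_def P_def by auto
  moreover have "\<exists>u\<in>A. \<forall>q\<in>C. P q u" if C: "C \<in> Chains (relation_of P A)" for C
  proof (cases "C = {}")
    case True
    then show ?thesis using assms by (auto simp: A_def)
  next
    case False
    have sub: "\<forall>q\<in>C. sublinear q \<and> q \<le> p"
      using C by (auto simp: Chains_def relation_of_def A_def)
    have chain: "q \<in> C \<Longrightarrow> r \<in> C \<Longrightarrow> q \<le> r \<or> r \<le> q" for q r
      using C by (auto simp: Chains_def relation_of_def P_def)
    have "Inf C \<le> q" if "q \<in> C" for q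
      using Inf_sublinear_family_le[OF sub that] by (simp add: le_fun_def)
    moreover from this have "Inf C \<in> A"
      using sublinear_Inf_chain[OF False sub chain] False sub by (auto simp: A_def intro: order_trans)
    ultimately show ?thesis by (auto simp: P_def)
  qed
  ultimately obtain m where "m \<in> A" and "\<forall>q\<in>A. P m q \<longrightarrow> q = m"
    using predicate_Zorn by metis
  then show ?thesis by (auto simp: A_def P_def intro: order_trans)
qed

lemma sublinear_ex_linear_below:
  fixes p :: "'v::real_vector \<Rightarrow> real"
  assumes "sublinear p"
  shows "\<exists>l. linear l \<and> l \<le> p"
  using sublinear_ex_minimal_below[OF assms] sublinear_minimal_imp_linear by blast

theorem hahn_banach:
  fixes N :: "'v::real_vector \<Rightarrow> real" and F :: "'m::real_vector \<Rightarrow> 'v" and \<phi> :: "'m \<Rightarrow> real"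
  assumes N: "sublinear N" and F: "linear F" and \<phi>: "linear \<phi>" and S: "subspace S"
    and dom: "\<forall>m\<in>S. \<phi> m \<le> N (F m)"
  shows "\<exists>l. linear l \<and> l \<le> N \<and> (\<forall>m\<in>S. l (F m) = \<phi> m)"
proof -
  let ?p = "\<lambda>x. INF m\<in>S. N (x + F m) - \<phi> m"
  note cone = subspace_imp_convex_cone[OF S]
  note le = INF_translate_le[OF N F \<phi> cone dom]
  obtain l where l: "linear l" and "l \<le> ?p"
    using sublinear_ex_linear_below[OF sublinear_INF_translate[OF N F \<phi> cone dom]] by blast
  then have l_le: "l x \<le> N (x + F m) - \<phi> m" if "m \<in> S" for x m
    using le[OF that] by (auto simp: le_fun_def intro: order_trans)
  have "l \<le> N"
    using l_le[OF subspace_0[OF S]] F \<phi> by (simp add: le_fun_def linear_0)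
  moreover have "l (F m) = \<phi> m" if "m \<in> S" for m
  proof -
    have "l (F m) \<le> \<phi> m" and "l (F (- m)) \<le> - \<phi> m"
      using l_le[of "- m" "F m"] l_le[OF that, of "F (- m)"] subspace_neg[OF S that]
        sublinear_zero[OF N] linear_neg[OF F] linear_neg[OF \<phi>] by simp_all
    then show ?thesis
      using linear_neg[OF F] linear_neg[OF l] by simp
  qed
  ultimately show ?thesis using l by blast
qed

section \<open>Functionals on normed spaces\<close>

lemma hahn_banach_blinfun:
  fixes F :: "'m::real_vector \<Rightarrow> 'a::real_normed_vector" and \<phi> :: "'m \<Rightarrow> real"
  assumes F: "linear F" and \<phi>: "linear \<phi>" and S: "subspace S" and K: "0 \<le> K"
    and dom: "\<forall>m\<in>S. \<phi> m \<le> K * norm (F m)"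
  shows "\<exists>f::'a \<Rightarrow>\<^sub>L real. norm f \<le> K \<and> (\<forall>m\<in>S. blinfun_apply f (F m) = \<phi> m)"
proof -
  obtain l where l: "linear l" and l_le: "l \<le> (\<lambda>x. K * norm x)" and lF: "\<forall>m\<in>S. l (F m) = \<phi> m"
    using hahn_banach[OF sublinear_norm[OF K] F \<phi> S dom] by blast
  have bound: "norm (l x) \<le> norm x * K" for x
    using l_le linear_neg[OF l, of x] unfolding le_fun_def
    by (metis abs_le_iff mult.commute norm_minus_cancel real_norm_def)
  have "bounded_linear l"
    using l bound by (intro bounded_linear_intro[where K = K]) (simp_all add: linear_add linear_scale)
  then have "blinfun_apply (Blinfun l) = l"
    by (rule bounded_linear_Blinfun_apply)
  moreover from this have "norm (Blinfun l) \<le> K"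
    using bound K by (intro norm_blinfun_bound) (simp_all add: mult.commute)
  ultimately show ?thesis using lF by metis
qed

lemma exists_norming_functional:
  fixes x :: "'a::real_normed_vector"
  shows "\<exists>f::'a \<Rightarrow>\<^sub>L real. norm f \<le> 1 \<and> blinfun_apply f x = norm x"
proof -
  have "\<forall>t\<in>UNIV. t *\<^sub>R norm x \<le> 1 * norm (t *\<^sub>R x)"
    by (simp add: mult_right_mono)
  then obtain f :: "'a \<Rightarrow>\<^sub>L real"
    where "norm f \<le> 1" and "\<forall>t\<in>UNIV. blinfun_apply f (t *\<^sub>R x) = t *\<^sub>R norm x"
    using hahn_banach_blinfun[OF linear_scaleR_left linear_scaleR_left subspace_UNIV zero_le_one]
    by blast
  then show ?thesis by (metis UNIV_I scaleR_one)
qed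

lemma functionals_vanish_imp_zero:
  fixes x :: "'a::real_normed_vector"
  assumes "\<And>f::'a \<Rightarrow>\<^sub>L real. blinfun_apply f x = 0"
  shows "x = 0"
  using exists_norming_functional[of x] assms by auto

lemma exists_functional_annihilating_subspace:
  fixes x :: "'a::real_normed_vector"
  assumes W: "subspace W" and x: "x \<notin> closure W"
  shows "\<exists>f::'a \<Rightarrow>\<^sub>L real. blinfun_apply f x = 1 \<and> (\<forall>w\<in>W. blinfun_apply f w = 0)"
proof -
  define \<delta> where "\<delta> = infdist x W"
  have "\<delta> > 0"
    using x subspace_0[OF W] in_closure_iff_infdist_zero[of W x] infdist_nonneg[of x W]
    by (force simp: \<delta>_def)
  have dist_bound: "a * \<delta> \<le> norm (w + a *\<^sub>R x)" if "w \<in> W" for w a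
  proof (cases "a = 0")
    case False
    have "- (inverse a *\<^sub>R w) \<in> W"
      using W that by (simp add: subspace_neg subspace_scale)
    then have "\<delta> \<le> norm (x + inverse a *\<^sub>R w)"
      unfolding \<delta>_def by (metis dist_norm infdist_le diff_minus_eq_add)
    then have "\<bar>a\<bar> * \<delta> \<le> norm (a *\<^sub>R (x + inverse a *\<^sub>R w))"
      by (simp add: mult_left_mono)
    also have "a *\<^sub>R (x + inverse a *\<^sub>R w) = w + a *\<^sub>R x"
      using False by (simp add: algebra_simps)
    finally show ?thesis
      using \<open>\<delta> > 0\<close> by (smt (verit) mult_right_mono abs_ge_self)
  qed (simp add: \<open>\<delta> > 0\<close> less_imp_le)
  have sub: "subspace (W \<times> (UNIV :: real set))"
    using W by (auto simp: subspace_def zero_prod_def)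
  have lin: "linear (\<lambda>(w, a). w + a *\<^sub>R x)"
    by (rule linearI) (auto simp: algebra_simps)
  have K: "0 \<le> inverse \<delta>"
    using \<open>\<delta> > 0\<close> by simp
  have "\<forall>m\<in>W \<times> UNIV. snd m \<le> inverse \<delta> * norm ((\<lambda>(w, a). w + a *\<^sub>R x) m)"
    using dist_bound \<open>\<delta> > 0\<close> by (auto simp: field_simps)
  then obtain f :: "'a \<Rightarrow>\<^sub>L real"
    where "\<forall>m\<in>W \<times> UNIV. blinfun_apply f ((\<lambda>(w, a). w + a *\<^sub>R x) m) = snd m"
    using hahn_banach_blinfun[OF lin linear_snd sub K] by blast
  then have f: "blinfun_apply f (w + a *\<^sub>R x) = a" if "w \<in> W" for w a
    using that by auto
  show ?thesis
    using f[OF subspace_0[OF W], of 1] f[of _ 0] by auto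
qed

lemma norm_norming_functional:
  fixes f :: "'a::real_normed_vector \<Rightarrow>\<^sub>L real"
  assumes "norm f \<le> 1" and "blinfun_apply f x = norm x" and "x \<noteq> 0"
  shows "norm f = 1"
proof -
  have "norm x \<le> norm f * norm x"
    using norm_blinfun[of f x] assms(2) by simp
  then have "1 \<le> norm f"
    using assms(3) by (simp add: mult_le_cancel_right1)
  then show ?thesis
    using assms(1) by linarith
qed

lemma smooth_point_norming_functional_unique:
  fixes f g :: "'a::real_normed_vector \<Rightarrow>\<^sub>L real"
  assumes x: "smooth_point x"
    and "norm f \<le> 1" "blinfun_apply f x = norm x"
    and "norm g \<le> 1" "blinfun_apply g x = norm x"
  shows "f = g"
proof -
  from x have "x \<noteq> 0" and "\<exists>!h::'a \<Rightarrow>\<^sub>L real. norm h = 1 \<and> blinfun_apply h x = norm x"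
    by (auto simp: smooth_point_def)
  moreover have "norm f = 1" and "norm g = 1"
    using assms \<open>x \<noteq> 0\<close> norm_norming_functional by blast+
  ultimately show ?thesis
    using assms(3,5) by auto
qed

section \<open>Smooth operators\<close>

lemma norm_blinfun_compose_prod_left:
  fixes g :: "'b::real_normed_vector \<Rightarrow>\<^sub>L real" and x :: "'a::real_normed_vector"
  shows "norm (g o\<^sub>L blinfun.prod_left x :: ('a \<Rightarrow>\<^sub>L 'b) \<Rightarrow>\<^sub>L real) \<le> norm g * norm x"
proof -
  have "norm (blinfun.prod_left x :: ('a \<Rightarrow>\<^sub>L 'b) \<Rightarrow>\<^sub>L 'b) \<le> norm x"
  proof (rule norm_blinfun_bound)
    fix S :: "'a \<Rightarrow>\<^sub>L 'b"
    show "norm (blinfun_apply (blinfun.prod_left x) S) \<le> norm x * norm S"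
      using norm_blinfun[of S x] by (simp add: mult.commute)
  qed simp
  then have "norm g * norm (blinfun.prod_left x :: ('a \<Rightarrow>\<^sub>L 'b) \<Rightarrow>\<^sub>L 'b) \<le> norm g * norm x"
    by (rule mult_left_mono) simp
  then show ?thesis
    using norm_blinfun_compose[of g "blinfun.prod_left x"] by linarith
qed

lemma smooth_point_norming_pair_unique:
  fixes T S :: "'a::real_normed_vector \<Rightarrow>\<^sub>L 'b::real_normed_vector"
  assumes T: "smooth_point T"
    and g: "norm g \<le> 1" "norm x \<le> 1" "blinfun_apply g (blinfun_apply T x) = norm T"
    and g': "norm g' \<le> 1" "norm x' \<le> 1" "blinfun_apply g' (blinfun_apply T x') = norm T"
  shows "blinfun_apply g (blinfun_apply S x) = blinfun_apply g' (blinfun_apply S x')"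
proof -
  have "norm (g o\<^sub>L blinfun.prod_left x) \<le> 1" "norm (g' o\<^sub>L blinfun.prod_left x') \<le> 1"
    using norm_blinfun_compose_prod_left[of g x] mult_le_one[OF g(1) norm_ge_zero g(2)]
      norm_blinfun_compose_prod_left[of g' x'] mult_le_one[OF g'(1) norm_ge_zero g'(2)]
    by linarith+
  then have "(g o\<^sub>L blinfun.prod_left x :: ('a \<Rightarrow>\<^sub>L 'b) \<Rightarrow>\<^sub>L real) = g' o\<^sub>L blinfun.prod_left x'"
    using g(3) g'(3) by (intro smooth_point_norming_functional_unique[OF T]) simp_all
  then have "blinfun_apply (g o\<^sub>L blinfun.prod_left x) S = blinfun_apply (g' o\<^sub>L blinfun.prod_left x') S"
    by (rule arg_cong)
  then show ?thesis by simp
qed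

lemma norm_attainment_set_smooth_point:
  fixes T :: "'a::real_normed_vector \<Rightarrow>\<^sub>L 'b::real_normed_vector"
  assumes T: "smooth_point T" and x0: "x0 \<in> norm_attainment_set T"
  shows "norm_attainment_set T = {x0, - x0}"
proof (intro equalityI subsetI)
  fix y
  assume y: "y \<in> norm_attainment_set T"
  have x0_norm: "norm x0 = 1" and y_norm: "norm y = 1" and "norm T \<noteq> 0"
    using x0 y T by (auto simp: norm_attainment_set_def smooth_point_def)
  obtain gx :: "'b \<Rightarrow>\<^sub>L real" where gx: "norm gx \<le> 1" "blinfun_apply gx (blinfun_apply T x0) = norm T"
    using exists_norming_functional[of "blinfun_apply T x0"] x0 by (auto simp: norm_attainment_set_def)
  obtain gy :: "'b \<Rightarrow>\<^sub>L real" where gy: "norm gy \<le> 1" "blinfun_apply gy (blinfun_apply T y) = norm T"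
    using exists_norming_functional[of "blinfun_apply T y"] y by (auto simp: norm_attainment_set_def)
  define c where "c = blinfun_apply gy (blinfun_apply T x0) / norm T"
  have "blinfun_apply u (x0 - c *\<^sub>R y) = 0" for u :: "'a \<Rightarrow>\<^sub>L real"
  proof -
    let ?S = "blinfun_scaleR_left (blinfun_apply T x0) o\<^sub>L u"
    have "blinfun_apply gx (blinfun_apply ?S x0) = blinfun_apply gy (blinfun_apply ?S y)"
      using smooth_point_norming_pair_unique[OF T gx(1) _ gx(2) gy(1) _ gy(2), where S = ?S]
        x0_norm y_norm by simp
    then have "blinfun_apply u x0 * norm T = blinfun_apply u y * (c * norm T)"
      using \<open>norm T \<noteq> 0\<close> by (simp add: gx(2) c_def blinfun.scaleR_right)
    then show ?thesis
      using \<open>norm T \<noteq> 0\<close> by (simp add: blinfun.diff_right blinfun.scaleR_right)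
  qed
  then have "x0 = c *\<^sub>R y"
    using functionals_vanish_imp_zero by fastforce
  then have "\<bar>c\<bar> = 1"
    using x0_norm y_norm by simp
  with \<open>x0 = c *\<^sub>R y\<close> show "y \<in> {x0, - x0}"
    by (auto simp: abs_if split: if_splits)
next
  fix y
  assume "y \<in> {x0, - x0}"
  then show "y \<in> norm_attainment_set T"
    using x0 by (auto simp: norm_attainment_set_def blinfun.minus_right)
qed

lemma smooth_point_apply_norm_attaining:
  fixes T :: "'a::real_normed_vector \<Rightarrow>\<^sub>L 'b::real_normed_vector"
  assumes T: "smooth_point T" and x0: "x0 \<in> norm_attainment_set T"
  shows "smooth_point (blinfun_apply T x0)"
proof -
  have x0_norm: "norm x0 = 1" and Tx0: "norm (blinfun_apply T x0) = norm T" and "T \<noteq> 0"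
    using x0 T by (auto simp: norm_attainment_set_def smooth_point_def)
  then have "blinfun_apply T x0 \<noteq> 0"
    by auto
  obtain gx :: "'b \<Rightarrow>\<^sub>L real" where gx: "norm gx \<le> 1" "blinfun_apply gx (blinfun_apply T x0) = norm T"
    using exists_norming_functional[of "blinfun_apply T x0"] Tx0 by auto
  obtain h :: "'a \<Rightarrow>\<^sub>L real" where h: "blinfun_apply h x0 = 1"
    using exists_norming_functional[of x0] x0_norm by auto
  have "g = gx" if g: "norm g = 1" "blinfun_apply g (blinfun_apply T x0) = norm T" for g
  proof (rule blinfun_eqI)
    fix v
    have "blinfun_apply g (blinfun_apply (blinfun_scaleR_left v o\<^sub>L h) x0)
        = blinfun_apply gx (blinfun_apply (blinfun_scaleR_left v o\<^sub>L h) x0)"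
      using smooth_point_norming_pair_unique[OF T _ _ g(2) gx(1) _ gx(2),
          where S = "blinfun_scaleR_left v o\<^sub>L h"] g(1) x0_norm by simp
    then show "blinfun_apply g v = blinfun_apply gx v"
      by (simp add: h)
  qed
  moreover have "norm gx = 1"
    using norm_norming_functional[OF gx(1), of "blinfun_apply T x0"] gx(2) Tx0
      \<open>blinfun_apply T x0 \<noteq> 0\<close> by simp
  ultimately show ?thesis
    using \<open>blinfun_apply T x0 \<noteq> 0\<close> gx(2) Tx0 unfolding smooth_point_def by metis
qed

lemma norming_sequence_norm_le:
  fixes T S :: "'a::real_normed_vector \<Rightarrow>\<^sub>L 'b::real_normed_vector"
  assumes xs: "norming_sequence T xs" and eq: "\<And>n. blinfun_apply S (xs n) = blinfun_apply T (xs n)"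
  shows "norm T \<le> norm S"
proof (rule LIMSEQ_le_const2)
  show "(\<lambda>n. norm (blinfun_apply T (xs n))) \<longlonglongrightarrow> norm T"
    using xs by (simp add: norming_sequence_def)
  have "norm (blinfun_apply T (xs n)) \<le> norm S" for n
  proof -
    have "norm (blinfun_apply T (xs n)) = norm (blinfun_apply S (xs n))"
      by (simp only: eq)
    also have "\<dots> \<le> norm S * norm (xs n)"
      by (rule norm_blinfun)
    also have "norm (xs n) = 1"
      using xs unfolding norming_sequence_def by blast
    finally show ?thesis by simp
  qed
  then show "\<exists>N. \<forall>n\<ge>N. norm (blinfun_apply T (xs n)) \<le> norm S"
    by blast
qed

lemma norming_sequence_ex_support_functional_zero:
  fixes T A :: "'a::real_normed_vector \<Rightarrow>\<^sub>L 'b::real_normed_vector"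
  assumes xs: "norming_sequence T xs" and A: "\<And>n. blinfun_apply A (xs n) = 0"
  shows "\<exists>l::('a \<Rightarrow>\<^sub>L 'b) \<Rightarrow>\<^sub>L real. norm l \<le> 1 \<and> blinfun_apply l T = norm T \<and> blinfun_apply l A = 0"
proof -
  have "a * norm T \<le> 1 * norm (a *\<^sub>R T + b *\<^sub>R A)" for a b
  proof (cases "a > 0")
    case True
    have "norm T \<le> norm (T + (b / a) *\<^sub>R A)"
      by (rule norming_sequence_norm_le[OF xs]) (simp add: A blinfun.add_left blinfun.scaleR_left)
    also have "T + (b / a) *\<^sub>R A = inverse a *\<^sub>R (a *\<^sub>R T + b *\<^sub>R A)"
      using True by (simp add: algebra_simps divide_inverse)
    also have "norm \<dots> = inverse a * norm (a *\<^sub>R T + b *\<^sub>R A)"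
      using True by simp
    finally show ?thesis
      using True by (simp add: field_simps)
  qed (simp add: mult_nonpos_nonneg order_trans[OF _ norm_ge_zero])
  then have dom: "\<forall>m\<in>UNIV. (\<lambda>(a, b). a * norm T) m \<le> 1 * norm ((\<lambda>(a, b). a *\<^sub>R T + b *\<^sub>R A) m)"
    by auto
  have "linear (\<lambda>(a::real, b::real). a *\<^sub>R T + b *\<^sub>R A)" and "linear (\<lambda>(a::real, b::real). a * norm T)"
    by (auto intro!: linearI simp: algebra_simps)
  then obtain l :: "('a \<Rightarrow>\<^sub>L 'b) \<Rightarrow>\<^sub>L real"
    where "norm l \<le> 1" and l: "\<And>a b. blinfun_apply l (a *\<^sub>R T + b *\<^sub>R A) = a * norm T"
    using hahn_banach_blinfun[OF _ _ subspace_UNIV zero_le_one dom] by auto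
  then show ?thesis
    using l[of 1 0] l[of 0 1] by auto
qed

lemma norm_attaining_in_closure_span_norming_sequence:
  fixes T :: "'a::real_normed_vector \<Rightarrow>\<^sub>L 'b::real_normed_vector"
  assumes T: "smooth_point T" and x0: "x0 \<in> norm_attainment_set T"
    and xs: "norming_sequence T xs"
  shows "x0 \<in> closure (span (range xs))"
proof (rule ccontr)
  assume "x0 \<notin> closure (span (range xs))"
  then obtain f :: "'a \<Rightarrow>\<^sub>L real"
    where f_x0: "blinfun_apply f x0 = 1" and f_span: "\<forall>w\<in>span (range xs). blinfun_apply f w = 0"
    using exists_functional_annihilating_subspace[OF subspace_span] by blast
  define A where "A = blinfun_scaleR_left (blinfun_apply T x0) o\<^sub>L f"
  have "blinfun_apply A (xs n) = 0" for n
    using f_span by (simp add: A_def span_base)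
  then obtain l :: "('a \<Rightarrow>\<^sub>L 'b) \<Rightarrow>\<^sub>L real"
    where l: "norm l \<le> 1" "blinfun_apply l T = norm T" and "blinfun_apply l A = 0"
    using norming_sequence_ex_support_functional_zero[OF xs] by blast
  have x0_norm: "norm x0 = 1" and Tx0: "norm (blinfun_apply T x0) = norm T" and "norm T > 0"
    using x0 T by (auto simp: norm_attainment_set_def smooth_point_def)
  obtain gx :: "'b \<Rightarrow>\<^sub>L real" where gx: "norm gx \<le> 1" "blinfun_apply gx (blinfun_apply T x0) = norm T"
    using exists_norming_functional[of "blinfun_apply T x0"] Tx0 by auto
  have "norm (gx o\<^sub>L blinfun.prod_left x0) \<le> 1"
    using norm_blinfun_compose_prod_left[of gx x0] gx(1) x0_norm by simp
  then have "l = gx o\<^sub>L blinfun.prod_left x0"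
    using smooth_point_norming_functional_unique[OF T l] gx(2) by simp
  then have "blinfun_apply l A = norm T"
    using gx(2) by (simp add: A_def f_x0)
  with \<open>blinfun_apply l A = 0\<close> \<open>norm T > 0\<close> show False
    by simp
qed

theorem theorem3p6:
  fixes T :: "'a::real_normed_vector \<Rightarrow>\<^sub>L 'b::real_normed_vector"
  assumes "smooth_point T"
    and "norm_attainment_set T \<noteq> {}"
  shows "\<exists>x0. norm x0 = 1 \<and> norm_attainment_set T = {x0, - x0}
           \<and> smooth_point (blinfun_apply T x0)
           \<and> (\<forall>xs. norming_sequence T xs \<longrightarrow> x0 \<in> closure (span (range xs)))"
proof -
  obtain x0 where x0: "x0 \<in> norm_attainment_set T"
    using assms(2) by blast
  then have "norm x0 = 1"
    by (simp add: norm_attainment_set_def)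
  then show ?thesis
    using norm_attainment_set_smooth_point[OF assms(1) x0]
      smooth_point_apply_norm_attaining[OF assms(1) x0]
      norm_attaining_in_closure_span_norming_sequence[OF assms(1) x0]
    by blast
qed

end
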